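(* Let $D\in\mathcal{U}(n,s_1\cdots s_{p+q})$ (first $p$ factors qualitative, last $q$ quantitative), let $N=\prod_{k=1}^{p+q}s_k$ and $y=y(D)$. Then $$\mathrm{QQD}^2(D)=-\prod_{k=1}^{p}\left(\frac{5s_k+1}{4s_k}\right)\left(\frac43\right)^q+\frac{1}{n^2}y^TAy,$$ where $A=A_1\otimes A_2\otimes\cdots\otimes A_{p+q}$ ($\otimes$ the Kronecker product), $A_k=(t^k_{ij})_{i,j=1}^{s_k}$, with $t^k_{ij}=(3/2)^{\delta_{ij}}(5/4)^{1-\delta_{ij}}$ for $k=1,\dots,p$ and $t^k_{ij}=\frac32-\frac{|i-j|(s_k-|i-j|)}{s_k^2}$ for $k=p+1,\dots,p+q$.
   Context: A U-type design in $\mathcal{U}(n,s_1\cdots s_{p+q})$ is an $n\times(p+q)$ matrix whose $k$th column takes each value in $\{0,\dots,s_k-1\}$ equally often; the first $p$ columns are qualitative, the last $q$ quantitative. For quantitative columns a level $x$ is transformed to $(2x+1)/(2s_k)\in[0,1]$. Let $\chi=\prod_k\chi_k$, $\chi_k=\{0,\dots,s_k-1\}$ for $k\le p$, $\chi_k=[0,1]$ for $k>p$, and $F$ the uniform distribution on $\chi$. Kernel: $\mathcal{K}(t,z)=\prod_k\mathcal{K}_k(t_k,z_k)$ with $\mathcal{K}_k=(3/2)^{\delta_{t_kz_k}}(5/4)^{1-\delta_{t_kz_k}}$ for $k\le p$ ($\delta$ the Kronecker delta) and $\mathcal{K}_k=\frac32-|t_k-z_k|+|t_k-z_k|^2$ for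 $k>p$. For $D$ with (transformed) rows $x_1,\dots,x_n$, $\mathrm{QQD}^2(D)=\int_{\chi^2}\mathcal{K}\,dF\,dF-\frac2n\sum_i\int_\chi\mathcal{K}(t,x_i)dF(t)+\frac1{n^2}\sum_{i,j}\mathcal{K}(x_i,x_j)$. The vector $y(D)$ is the $N$-dimensional column vector whose entries $n(i_1,\dots,i_{p+q})$, arranged in lexicographic order of $(i_1,\dots,i_{p+q})$, are the numbers of runs of $D$ at level combination $(i_1,\dots,i_{p+q})$. *)

theory Defs
  imports "HOL-Probability.Probability"
begin

text \<open>A design with n runs and m = p+q factors is a function D :: nat => nat => nat,
  D i k being the level of run i (i < n) in column k (k < m).\<close>

definition U_type :: "nat \<Rightarrow> (nat \<Rightarrow> nat) \<Rightarrow> nat \<Rightarrow> (nat \<Rightarrow> nat \<Rightarrow> nat) \<Rightarrow> bool" where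
  "U_type n s m D \<longleftrightarrow>
     (\<forall>i<n. \<forall>k<m. D i k < s k) \<and>
     (\<forall>k<m. \<forall>v<s k. \<forall>w<s k. card {i. i < n \<and> D i k = v} = card {i. i < n \<and> D i k = w})"

definition design_point :: "nat \<Rightarrow> (nat \<Rightarrow> nat) \<Rightarrow> (nat \<Rightarrow> nat) \<Rightarrow> nat \<Rightarrow> real" where
  "design_point p s r k = (if k < p then real (r k) else (2 * real (r k) + 1) / (2 * real (s k)))"

definition chi_measure :: "nat \<Rightarrow> nat \<Rightarrow> (nat \<Rightarrow> nat) \<Rightarrow> (nat \<Rightarrow> real) measure" where
  "chi_measure p q s = PiM {..<p+q}
     (\<lambda>k. if k < p then uniform_count_measure (real ` {..<s k}) else uniform_measure lborel {0..1})"

definition kernel1 :: "nat \<Rightarrow> nat \<Rightarrow> real \<Rightarrow> real \<Rightarrow> real" where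
  "kernel1 p k t z = (if k < p then (3/2) ^ (if t = z then 1 else 0) * (5/4) ^ (1 - (if t = z then 1 else 0))
                      else 3/2 - \<bar>t - z\<bar> + \<bar>t - z\<bar>^2)"

definition kernel :: "nat \<Rightarrow> nat \<Rightarrow> (nat \<Rightarrow> real) \<Rightarrow> (nat \<Rightarrow> real) \<Rightarrow> real" where
  "kernel p q t z = (\<Prod>k<p+q. kernel1 p k (t k) (z k))"

definition QQD2 :: "nat \<Rightarrow> nat \<Rightarrow> nat \<Rightarrow> (nat \<Rightarrow> nat) \<Rightarrow> (nat \<Rightarrow> nat \<Rightarrow> nat) \<Rightarrow> real" where
  "QQD2 n p q s D =
     (let F = chi_measure p q s; x = (\<lambda>i. design_point p s (D i)) in
       (\<integral>t. (\<integral>z. kernel p q t z \<partial>F) \<partial>F)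
       - 2 / real n * (\<Sum>i<n. \<integral>t. kernel p q t (x i) \<partial>F)
       + 1 / (real n)^2 * (\<Sum>i<n. \<Sum>j<n. kernel p q (x i) (x j)))"

text \<open>Position (0-based) of a level combination in the lexicographic order
  of {0..<s 0} x ... x {0..<s (m-1)} (mixed radix, last coordinate fastest).\<close>
definition lex_index :: "(nat \<Rightarrow> nat) \<Rightarrow> nat \<Rightarrow> (nat \<Rightarrow> nat) \<Rightarrow> nat" where
  "lex_index s m a = (\<Sum>k<m. a k * (\<Prod>l\<in>{k<..<m}. s l))"

definition y_vec :: "nat \<Rightarrow> (nat \<Rightarrow> nat) \<Rightarrow> nat \<Rightarrow> (nat \<Rightarrow> nat \<Rightarrow> nat) \<Rightarrow> nat \<Rightarrow> real" where
  "y_vec n s m D j = real (card {i. i < n \<and> lex_index s m (D i) = j})"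

text \<open>Kronecker product of a list of square matrices (M, dim), matrices as 0-indexed
  functions: (A \<otimes> B)(i,j) = A(i div d_B, j div d_B) * B(i mod d_B, j mod d_B).\<close>
fun kron_list :: "((nat \<Rightarrow> nat \<Rightarrow> real) \<times> nat) list \<Rightarrow> nat \<Rightarrow> nat \<Rightarrow> real" where
  "kron_list [] = (\<lambda>i j. 1)"
| "kron_list ((M, d) # rest) =
     (let d' = prod_list (map snd rest) in
        (\<lambda>i j. M (i div d') (j div d') * kron_list rest (i mod d') (j mod d')))"

text \<open>A_k with 0-based indices (|i-j| is unchanged by the shift from 1-based).\<close>
definition A_factor :: "nat \<Rightarrow> (nat \<Rightarrow> nat) \<Rightarrow> nat \<Rightarrow> nat \<Rightarrow> nat \<Rightarrow> real" where
  "A_factor p s k i j =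
     (if k < p then (3/2) ^ (if i = j then 1 else 0) * (5/4) ^ (1 - (if i = j then 1 else 0))
      else 3/2 - real (nat \<bar>int i - int j\<bar>) * (real (s k) - real (nat \<bar>int i - int j\<bar>)) / (real (s k))^2)"

definition A_matrix :: "nat \<Rightarrow> nat \<Rightarrow> (nat \<Rightarrow> nat) \<Rightarrow> nat \<Rightarrow> nat \<Rightarrow> real" where
  "A_matrix p q s = kron_list (map (\<lambda>k. (A_factor p s k, s k)) [0..<p+q])"

end

theory Submission
  imports Defs
begin

(* Every one-dimensional kernel has a constant marginal: for each point x of the support of
   F_k, the integral of K_k(x, z) dF_k(z) equals (3/2 + 5/4 (s_k - 1)) / s_k = (5 s_k + 1) / (4 s_k)
   for a qualitative factor and 4/3 for a quantitative one.  As K and F are products, the first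
   two terms of QQD^2 are therefore both equal to the product C of these constants, whatever the
   design, and together contribute -C.  In the last term, at levels a, b of two runs the
   quantitative kernel evaluates to 3/2 - |a - b| (s_k - |a - b|) / s_k^2, so the product kernel
   is the entry of the Kronecker product A at the lexicographic positions of the two level
   combinations; grouping the runs by level combination turns the double sum into y^T A y. *)

lemma
  fixes f :: "real \<Rightarrow> real" and a b :: real
  assumes "a < b" and "continuous_on UNIV f"
  shows integrable_uniform_measure_Icc: "integrable (uniform_measure lborel {a..b}) f"
    and integral_uniform_measure_Icc: "integral\<^sup>L (uniform_measure lborel {a..b}) f = integral {a..b} f / (b - a)"
proof -
  have f_meas: "f \<in> borel_measurable lborel"
    using assms(2) by (simp add: borel_measurable_continuous_onI)
  have f_int: "set_integrable lborel {a..b} f"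
    unfolding set_integrable_def
    using borel_integrable_compact[OF compact_Icc continuous_on_subset[OF assms(2)]] by simp
  have density: "uniform_measure lborel {a..b} = density lborel (\<lambda>x. ennreal (indicator {a..b} x / (b - a)))"
    using assms(1) by (simp add: uniform_measure_def divide_ennreal ennreal_indicator[symmetric])
  show "integrable (uniform_measure lborel {a..b}) f"
    unfolding density using f_int f_meas assms(1)
    by (subst integrable_density) (auto simp: set_integrable_def)
  have "integral\<^sup>L (uniform_measure lborel {a..b}) f = (LINT x:{a..b}|lborel. f x) / (b - a)"
    unfolding density using f_meas assms(1)
    by (subst integral_density) (auto simp: set_lebesgue_integral_def)
  also have "(LINT x:{a..b}|lborel. f x) = integral {a..b} f"
    using f_int by (rule set_borel_integral_eq_integral)
  finally show "integral\<^sup>L (uniform_measure lborel {a..b}) f = integral {a..b} f / (b - a)" .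
qed

lemma wrap_around_kernel_has_integral:
  fixes u :: real
  assumes "0 \<le> u" "u \<le> 1"
  shows "((\<lambda>z. 3/2 - \<bar>u - z\<bar> + (u - z)^2) has_integral 4/3) {0..1}"
proof -
  define F where "F z = 3/2 * z + (u - z)^2/2 - (u - z)^3/3" for z :: real
  define G where "G z = 3/2 * z - (z - u)^2/2 + (z - u)^3/3" for z :: real
  have "((\<lambda>z. 3/2 - (u - z) + (u - z)^2) has_integral (F u - F 0)) {0..u}"
    using assms(1) unfolding F_def
    by (intro fundamental_theorem_of_calculus)
       (auto simp flip: has_real_derivative_iff_has_vector_derivative
             intro!: derivative_eq_intros simp: power2_eq_square field_simps)
  then have left: "((\<lambda>z. 3/2 - \<bar>u - z\<bar> + (u - z)^2) has_integral (F u - F 0)) {0..u}"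
    by (rule has_integral_eq[rotated]) auto
  have "((\<lambda>z. 3/2 - (z - u) + (z - u)^2) has_integral (G 1 - G u)) {u..1}"
    using assms(2) unfolding G_def
    by (intro fundamental_theorem_of_calculus)
       (auto simp flip: has_real_derivative_iff_has_vector_derivative
             intro!: derivative_eq_intros simp: power2_eq_square field_simps)
  then have right: "((\<lambda>z. 3/2 - \<bar>u - z\<bar> + (u - z)^2) has_integral (G 1 - G u)) {u..1}"
    by (rule has_integral_eq[rotated]) (auto simp: power2_commute)
  have "(F u - F 0) + (G 1 - G u) = 4/3"
    unfolding F_def G_def by (simp add: power2_eq_square power3_eq_cube field_simps)
  with has_integral_combine[OF assms left right] show ?thesis by simp
qed

definition factor_measure :: "nat \<Rightarrow> (nat \<Rightarrow> nat) \<Rightarrow> nat \<Rightarrow> real measure" where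
  "factor_measure p s k =
     (if k < p then uniform_count_measure (real ` {..<s k}) else uniform_measure lborel {0..1})"

definition factor_support :: "nat \<Rightarrow> (nat \<Rightarrow> nat) \<Rightarrow> nat \<Rightarrow> real set" where
  "factor_support p s k = (if k < p then real ` {..<s k} else {0..1})"

definition factor_mean :: "nat \<Rightarrow> (nat \<Rightarrow> nat) \<Rightarrow> nat \<Rightarrow> real" where
  "factor_mean p s k = (if k < p then (5 * real (s k) + 1) / (4 * real (s k)) else 4/3)"

lemma chi_measure_eq_PiM: "chi_measure p q s = PiM {..<p+q} (factor_measure p s)"
  by (simp add: chi_measure_def factor_measure_def[abs_def])

lemma prob_space_factor_measure:
  assumes "k < p \<Longrightarrow> 0 < s k"
  shows "prob_space (factor_measure p s k)"
  using assms
  by (auto simp: factor_measure_def intro!: prob_space_uniform_count_measure prob_space_uniform_measure)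

lemma AE_in_factor_support: "AE x in factor_measure p s k. x \<in> factor_support p s k"
proof (cases "k < p")
  case True
  then show ?thesis
    by (auto simp: factor_measure_def factor_support_def space_uniform_count_measure)
next
  case False
  then show ?thesis
    unfolding factor_measure_def factor_support_def by (auto intro: AE_uniform_measureI)
qed

lemma continuous_on_kernel1_quantitative:
  "\<not> k < p \<Longrightarrow> continuous_on UNIV (kernel1 p k x)"
  unfolding kernel1_def by simp (intro continuous_intros)

lemma integrable_kernel1_factor_measure: "integrable (factor_measure p s k) (kernel1 p k x)"
proof (cases "k < p")
  case True
  then show ?thesis
    by (simp add: factor_measure_def uniform_count_measure_def integrable_point_measure_finite)
next
  case False
  then show ?thesis
    by (simp add: factor_measure_def integrable_uniform_measure_Icc continuous_on_kernel1_quantitative)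
qed

lemma integral_kernel1_factor_measure:
  assumes "k < p \<Longrightarrow> 0 < s k" and x: "x \<in> factor_support p s k"
  shows "integral\<^sup>L (factor_measure p s k) (kernel1 p k x) = factor_mean p s k"
proof (cases "k < p")
  case True
  let ?A = "real ` {..<s k}"
  have x: "x \<in> ?A" and card_A: "card ?A = s k"
    using x True by (auto simp: factor_support_def card_image)
  then have "0 < s k" by auto
  have "sum (kernel1 p k x) ?A = kernel1 p k x x + (\<Sum>v\<in>?A - {x}. kernel1 p k x v)"
    using x by (simp add: sum.remove)
  also have "\<dots> = 3/2 + (real (s k) - 1) * 5/4"
    using x True by (simp add: kernel1_def card_A Suc_le_eq \<open>0 < s k\<close>)
  finally show ?thesis
    using True assms(1) by (simp add: factor_measure_def factor_mean_def integral_uniform_count_measure card_A field_simps)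
next
  case False
  then have kernel: "kernel1 p k x = (\<lambda>z. 3/2 - \<bar>x - z\<bar> + (x - z)^2)"
    by (simp add: kernel1_def fun_eq_iff)
  have "0 \<le> x" "x \<le> 1"
    using x False by (simp_all add: factor_support_def)
  then have "integral {0..1} (kernel1 p k x) = 4/3"
    unfolding kernel by (intro integral_unique wrap_around_kernel_has_integral)
  with False show ?thesis
    by (simp add: factor_measure_def factor_mean_def integral_uniform_measure_Icc continuous_on_kernel1_quantitative)
qed

lemma borel_measurable_integral_kernel1_factor_measure:
  "(\<lambda>u. \<integral>z. kernel1 p k u z \<partial>factor_measure p s k) \<in> borel_measurable (factor_measure p s k)"
proof (cases "k < p")
  case True
  then show ?thesis
    by (simp add: factor_measure_def measurable_cong_sets[OF sets_uniform_count_measure_count_space refl])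
next
  case False
  interpret prob_space "uniform_measure lborel {0..1::real}"
    by (auto intro: prob_space_uniform_measure)
  show ?thesis
    using False unfolding factor_measure_def kernel1_def
    by (simp add: borel_measurable_lebesgue_integral)
qed

lemma
  assumes "k < p \<Longrightarrow> 0 < s k"
  shows integrable_integral_kernel1_factor_measure:
      "integrable (factor_measure p s k) (\<lambda>u. \<integral>z. kernel1 p k u z \<partial>factor_measure p s k)"
    and integral_integral_kernel1_factor_measure:
      "(\<integral>u. \<integral>z. kernel1 p k u z \<partial>factor_measure p s k \<partial>factor_measure p s k) = factor_mean p s k"
proof -
  interpret prob_space "factor_measure p s k"
    using assms by (rule prob_space_factor_measure)
  have const_ae: "AE u in factor_measure p s k.
      (\<integral>z. kernel1 p k u z \<partial>factor_measure p s k) = factor_mean p s k"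
    using AE_in_factor_support by eventually_elim (simp add: assms integral_kernel1_factor_measure)
  note meas = borel_measurable_integral_kernel1_factor_measure
  show "integrable (factor_measure p s k) (\<lambda>u. \<integral>z. kernel1 p k u z \<partial>factor_measure p s k)"
    using integrable_cong_AE[OF meas _ const_ae] by simp
  show "(\<integral>u. \<integral>z. kernel1 p k u z \<partial>factor_measure p s k \<partial>factor_measure p s k) = factor_mean p s k"
    using integral_cong_AE[OF meas _ const_ae] by (simp add: prob_space)
qed

lemma kernel1_commute: "kernel1 p k t z = kernel1 p k z t"
  unfolding kernel1_def by (auto simp: abs_minus_commute)

lemma product_sigma_finite_factor_measure:
  "\<forall>k<p. 0 < s k \<Longrightarrow> product_sigma_finite (factor_measure p s)"
  by (auto intro!: product_sigma_finite.intro prob_space_imp_sigma_finite prob_space_factor_measure)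

lemma integral_kernel_chi_measure:
  assumes s_pos: "\<forall>k<p. 0 < s k" and x: "\<forall>k<p+q. x k \<in> factor_support p s k"
  shows "(\<integral>t. kernel p q t x \<partial>chi_measure p q s) = (\<Prod>k<p+q. factor_mean p s k)"
proof -
  interpret product_sigma_finite "factor_measure p s"
    using s_pos by (rule product_sigma_finite_factor_measure)
  have "(\<integral>t. kernel p q t x \<partial>chi_measure p q s)
      = (\<Prod>k<p+q. \<integral>t. kernel1 p k t (x k) \<partial>factor_measure p s k)"
    unfolding kernel_def chi_measure_eq_PiM
    by (rule product_integral_prod) (auto simp: kernel1_commute[of p _ _ "x _"] intro: integrable_kernel1_factor_measure)
  also have "\<dots> = (\<Prod>k<p+q. \<integral>t. kernel1 p k (x k) t \<partial>factor_measure p s k)"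
    by (intro prod.cong Bochner_Integration.integral_cong refl kernel1_commute)
  also have "\<dots> = (\<Prod>k<p+q. factor_mean p s k)"
    using s_pos x by (intro prod.cong) (auto simp: integral_kernel1_factor_measure)
  finally show ?thesis .
qed

lemma integral_integral_kernel_chi_measure:
  assumes s_pos: "\<forall>k<p. 0 < s k"
  shows "(\<integral>t. \<integral>z. kernel p q t z \<partial>chi_measure p q s \<partial>chi_measure p q s) = (\<Prod>k<p+q. factor_mean p s k)"
proof -
  interpret product_sigma_finite "factor_measure p s"
    using s_pos by (rule product_sigma_finite_factor_measure)
  have inner: "(\<integral>z. kernel p q t z \<partial>chi_measure p q s)
      = (\<Prod>k<p+q. \<integral>z. kernel1 p k (t k) z \<partial>factor_measure p s k)" for t
    unfolding kernel_def chi_measure_eq_PiM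
    by (rule product_integral_prod) (auto intro: integrable_kernel1_factor_measure)
  have "(\<integral>t. \<integral>z. kernel p q t z \<partial>chi_measure p q s \<partial>chi_measure p q s)
      = (\<Prod>k<p+q. \<integral>u. \<integral>z. kernel1 p k u z \<partial>factor_measure p s k \<partial>factor_measure p s k)"
    unfolding inner unfolding chi_measure_eq_PiM
    by (rule product_integral_prod) (auto simp: s_pos intro: integrable_integral_kernel1_factor_measure)
  also have "\<dots> = (\<Prod>k<p+q. factor_mean p s k)"
    using s_pos by (intro prod.cong) (auto simp: integral_integral_kernel1_factor_measure)
  finally show ?thesis .
qed

lemma prod_factor_mean:
  "(\<Prod>k<p+q. factor_mean p s k) = (\<Prod>k<p. (5 * real (s k) + 1) / (4 * real (s k))) * (4/3) ^ q"
proof -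
  have "(\<Prod>k<p+q. factor_mean p s k) = (\<Prod>k<p. factor_mean p s k) * (\<Prod>k\<in>{p..<p+q}. factor_mean p s k)"
    by (subst prod.union_disjoint[symmetric]) (auto intro: prod.cong)
  then show ?thesis
    by (simp add: factor_mean_def)
qed

definition lex_index_list :: "nat list \<Rightarrow> (nat \<Rightarrow> nat) \<Rightarrow> nat" where
  "lex_index_list ds a = (\<Sum>k<length ds. a k * prod_list (drop (Suc k) ds))"

lemma lex_index_list_Cons:
  "lex_index_list (d # ds) a = a 0 * prod_list ds + lex_index_list ds (\<lambda>k. a (Suc k))"
  unfolding lex_index_list_def length_Cons by (subst sum.lessThan_Suc_shift) simp

lemma lex_index_list_less:
  "\<forall>k<length ds. a k < ds ! k \<Longrightarrow> lex_index_list ds a < prod_list ds"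
proof (induction ds arbitrary: a)
  case Nil
  then show ?case by (simp add: lex_index_list_def)
next
  case (Cons d ds)
  have "lex_index_list ds (\<lambda>k. a (Suc k)) < prod_list ds"
    using Cons.prems by (intro Cons.IH) auto
  moreover have "a 0 < d"
    using Cons.prems by auto
  ultimately have "a 0 * prod_list ds + lex_index_list ds (\<lambda>k. a (Suc k)) < Suc (a 0) * prod_list ds"
    and "Suc (a 0) * prod_list ds \<le> d * prod_list ds"
    by (simp, intro mult_le_mono1) (simp add: Suc_leI)
  then show ?case by (simp add: lex_index_list_Cons)
qed

lemma kron_list_lex_index_list:
  assumes "\<forall>k<length L. a k < snd (L ! k) \<and> b k < snd (L ! k)"
  shows "kron_list L (lex_index_list (map snd L) a) (lex_index_list (map snd L) b)
      = (\<Prod>k<length L. fst (L ! k) (a k) (b k))"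
  using assms
proof (induction L arbitrary: a b)
  case Nil
  then show ?case by simp
next
  case (Cons factor L)
  obtain M d where factor: "factor = (M, d)" by (cases factor)
  let ?a' = "\<lambda>k. a (Suc k)" and ?b' = "\<lambda>k. b (Suc k)"
  have shifted: "\<forall>k<length L. ?a' k < snd (L ! k) \<and> ?b' k < snd (L ! k)"
    using Cons.prems by (metis Suc_mono length_Cons nth_Cons_Suc)
  have "lex_index_list (map snd L) ?a' < prod_list (map snd L)"
    and "lex_index_list (map snd L) ?b' < prod_list (map snd L)"
    using shifted by (auto intro!: lex_index_list_less)
  moreover have "kron_list L (lex_index_list (map snd L) ?a') (lex_index_list (map snd L) ?b')
      = (\<Prod>k<length L. fst (L ! k) (?a' k) (?b' k))"
    using shifted by (rule Cons.IH)
  ultimately show ?case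
    unfolding factor length_Cons prod.lessThan_Suc_shift by (simp add: lex_index_list_Cons Let_def)
qed

lemma lex_index_eq_lex_index_list: "lex_index s m a = lex_index_list (map s [0..<m]) a"
proof -
  have "(\<Prod>l\<in>{k<..<m}. s l) = prod_list (drop (Suc k) (map s [0..<m]))" for k
    using prod.distinct_set_conv_list[of "[Suc k..<m]" s]
    by (simp add: drop_map atLeastSucLessThan_greaterThanLessThan[symmetric])
  then show ?thesis
    unfolding lex_index_def lex_index_list_def by simp
qed

lemma lex_index_less: "\<forall>k<m. a k < s k \<Longrightarrow> lex_index s m a < (\<Prod>k<m. s k)"
  using lex_index_list_less[of "map s [0..<m]" a] prod.distinct_set_conv_list[of "[0..<m]" s]
  by (simp add: lex_index_eq_lex_index_list atLeast0LessThan)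

lemma A_matrix_lex_index:
  assumes "\<forall>k<p+q. a k < s k \<and> b k < s k"
  shows "A_matrix p q s (lex_index s (p+q) a) (lex_index s (p+q) b) = (\<Prod>k<p+q. A_factor p s k (a k) (b k))"
  using kron_list_lex_index_list[of "map (\<lambda>k. (A_factor p s k, s k)) [0..<p+q]" a b] assms
  by (simp add: A_matrix_def lex_index_eq_lex_index_list o_def)

lemma design_point_in_factor_support:
  "r k < s k \<Longrightarrow> design_point p s r k \<in> factor_support p s k"
  by (auto simp: design_point_def factor_support_def divide_le_eq_1)

lemma kernel1_design_point:
  assumes "r k < s k" "r' k < s k"
  shows "kernel1 p k (design_point p s r k) (design_point p s r' k) = A_factor p s k (r k) (r' k)"
proof (cases "k < p")
  case True
  then show ?thesis by (simp add: kernel1_def design_point_def A_factor_def)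
next
  case False
  define d where "d = \<bar>real (r k) - real (r' k)\<bar>"
  define S where "S = real (s k)"
  have "S > 0" using assms by (simp add: S_def)
  have "design_point p s r k - design_point p s r' k = (real (r k) - real (r' k)) / S"
    using False \<open>S > 0\<close> by (simp add: design_point_def S_def field_simps)
  then have "\<bar>design_point p s r k - design_point p s r' k\<bar> = d / S"
    using \<open>S > 0\<close> by (simp add: d_def)
  then have "kernel1 p k (design_point p s r k) (design_point p s r' k) = 3/2 - d / S + (d / S)^2"
    using False by (simp add: kernel1_def del: power2_abs)
  also have "\<dots> = 3/2 - d * (S - d) / S^2"
    using \<open>S > 0\<close> by (simp add: power2_eq_square field_simps)
  also have "\<dots> = A_factor p s k (r k) (r' k)"
    using False by (simp add: A_factor_def S_def d_def)
  finally show ?thesis .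
qed

lemma kernel_design_point:
  assumes "\<forall>k<p+q. r k < s k \<and> r' k < s k"
  shows "kernel p q (design_point p s r) (design_point p s r')
      = A_matrix p q s (lex_index s (p+q) r) (lex_index s (p+q) r')"
  using assms by (simp add: kernel_def A_matrix_lex_index kernel1_design_point)

lemma sum_comp_eq_sum_card_fibres:
  fixes f :: "nat \<Rightarrow> 'a::comm_semiring_1" and h :: "nat \<Rightarrow> nat"
  assumes "\<forall>i<n. h i < N"
  shows "(\<Sum>i<n. f (h i)) = (\<Sum>a<N. of_nat (card {i. i < n \<and> h i = a}) * f a)"
proof -
  have "(\<Sum>i<n. f (h i)) = (\<Sum>a<N. \<Sum>i\<in>{i\<in>{..<n}. h i = a}. f (h i))"
    using assms by (intro sum.group[symmetric]) auto
  also have "\<dots> = (\<Sum>a<N. of_nat (card {i. i < n \<and> h i = a}) * f a)"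
    by (intro sum.cong) auto
  finally show ?thesis .
qed

lemma sum_sum_comp_eq_quadratic_form:
  fixes K :: "nat \<Rightarrow> nat \<Rightarrow> 'a::comm_semiring_1" and h :: "nat \<Rightarrow> nat"
  assumes "\<forall>i<n. h i < N"
  shows "(\<Sum>i<n. \<Sum>j<n. K (h i) (h j))
      = (\<Sum>a<N. \<Sum>b<N. of_nat (card {i. i < n \<and> h i = a}) * K a b * of_nat (card {i. i < n \<and> h i = b}))"
    (is "_ = (\<Sum>a<N. \<Sum>b<N. ?y a * K a b * ?y b)")
proof -
  have "(\<Sum>i<n. \<Sum>j<n. K (h i) (h j)) = (\<Sum>i<n. \<Sum>b<N. ?y b * K (h i) b)"
    using assms by (simp add: sum_comp_eq_sum_card_fibres[where f = "K _"])
  also have "\<dots> = (\<Sum>a<N. ?y a * (\<Sum>b<N. ?y b * K a b))"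
    using assms by (rule sum_comp_eq_sum_card_fibres)
  finally show ?thesis
    by (simp add: sum_distrib_left mult_ac)
qed

theorem lemma1:
  fixes n p q :: nat and s :: "nat \<Rightarrow> nat" and D :: "nat \<Rightarrow> nat \<Rightarrow> nat"
  assumes "n > 0"
    and "U_type n s (p + q) D"
  shows "QQD2 n p q s D =
           - (\<Prod>k<p. (5 * real (s k) + 1) / (4 * real (s k))) * (4/3) ^ q
           + 1 / (real n)^2 *
             (let N = (\<Prod>k<p+q. s k); y = y_vec n s (p + q) D; A = A_matrix p q s in
                \<Sum>i<N. \<Sum>j<N. y i * A i j * y j)"
proof -
  have levels: "\<forall>i<n. \<forall>k<p+q. D i k < s k"
    using assms(2) by (simp add: U_type_def)
  then have s_pos: "\<forall>k<p. 0 < s k"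
    using \<open>n > 0\<close> by (metis add.commute gr_zeroI not_less0 trans_less_add2)
  define F where "F = chi_measure p q s"
  define x where "x i = design_point p s (D i)" for i
  define C where "C = (\<Prod>k<p+q. factor_mean p s k)"
  have C: "C = (\<Prod>k<p. (5 * real (s k) + 1) / (4 * real (s k))) * (4/3) ^ q"
    unfolding C_def by (rule prod_factor_mean)
  define lex where "lex i = lex_index s (p+q) (D i)" for i
  have double_integral: "(\<integral>t. \<integral>z. kernel p q t z \<partial>F \<partial>F) = C"
    unfolding F_def C_def using s_pos by (rule integral_integral_kernel_chi_measure)
  have single_integral: "(\<integral>t. kernel p q t (x i) \<partial>F) = C" if "i < n" for i
    unfolding F_def C_def x_def
    using s_pos levels that by (intro integral_kernel_chi_measure) (auto intro: design_point_in_factor_support)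
  have "(\<Sum>i<n. \<Sum>j<n. kernel p q (x i) (x j)) = (\<Sum>i<n. \<Sum>j<n. A_matrix p q s (lex i) (lex j))"
    using levels by (intro sum.cong) (auto simp: x_def lex_def kernel_design_point)
  also have "\<dots> = (\<Sum>a<\<Prod>k<p+q. s k. \<Sum>b<\<Prod>k<p+q. s k.
      y_vec n s (p + q) D a * A_matrix p q s a b * y_vec n s (p + q) D b)"
    unfolding y_vec_def lex_def using levels
    by (intro sum_sum_comp_eq_quadratic_form) (auto intro: lex_index_less)
  finally show ?thesis
    using \<open>n > 0\<close> single_integral
    by (simp add: QQD2_def Let_def F_def[symmetric] x_def[symmetric] double_integral flip: C)
qed

end
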